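(* There exists an absolute constant $C_2>0$ such that for every $\delta_0>0$ the following holds: if $\|\mathcal T-\mathcal S\|_{\mathrm{op}}<\delta_0$ and $x\in\mathbb C^n$ satisfies $$8\frac{|\langle x,x^\natural\rangle|^2}{\|x^\natural\|^4}+\Big(4+\tfrac14\delta_0C_2\Big)\frac{\|x\|^2}{\|x^\natural\|^2}\le 4-\tfrac14\delta_0C_2,$$ then $(x^{\natural+})^TH_f(x^+)\,x^{\natural+}<0$, where $H_f$ is the Hessian of $f$ with respect to $x^+$.
   Context: Let $n,m\ge 1$, $a_1,\dots,a_m\in\mathbb C^n$ and $x^\natural\in\mathbb C^n$ with $x^\natural\neq0$. For $a,b\in\mathbb C^n$ write $\langle a,b\rangle=\sum_{j}a_j\overline{b_j}$ and let $\|\cdot\|$ be the Euclidean norm. Let $y_i=|\langle a_i,x^\natural\rangle|^2$. For $v\in\mathbb C^n$ put $v^+=(\mathrm{Re}\,v,\mathrm{Im}\,v)\in\mathbb R^{2n}$ and $v^-=(-\mathrm{Im}\,v,\mathrm{Re}\,v)$; $x$ and $x^+$ always correspond. Define $f:\mathbb R^{2n}\to\mathbb R$ by $f(x^+)=\sum_{i=1}^m\big(|\langle a_i,x\rangle|^2-y_i\big)^2$. Fix $\sigma>0$ (in the paper, $\sigma^2=\mathrm{Var}((a_i^+)_1)$ for random measurement vectors), set $c=m\sigma^4$. Define the order-4 tensors on $\mathbb R^{2n}$: $\mathcal T=\frac1c\sum_{i=1}^m(a_i^+)^{\otimes 4}$ and $\mathcal S_{i_1i_2i_3i_4}=\mathbf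 1_{i_1=i_2,\,i_3=i_4}+\mathbf 1_{i_1=i_3,\,i_2=i_4}+\mathbf 1_{i_1=i_4,\,i_2=i_3}$, and $\|\mathcal R\|_{\mathrm{op}}=\sup\{\langle \mathcal R,u_1\otimes u_2\otimes u_3\otimes u_4\rangle:\ u_j\in\mathbb R^{2n},\ \|u_1\|\|u_2\|\|u_3\|\|u_4\|=1\}$ (tensor inner product = sum of entrywise products). *)

theory Defs
  imports "HOL-Analysis.Analysis"
begin

text \<open>Vectors in C^n are represented as functions nat => complex, only the
entries with index < n are relevant. Vectors in R^(2n) are functions nat => real
with relevant indices < 2n.\<close>

definition cinner :: "nat \<Rightarrow> (nat \<Rightarrow> complex) \<Rightarrow> (nat \<Rightarrow> complex) \<Rightarrow> complex" where
  "cinner n a b = (\<Sum>j<n. a j * cnj (b j))"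

definition cnorm :: "nat \<Rightarrow> (nat \<Rightarrow> complex) \<Rightarrow> real" where
  "cnorm n v = sqrt (\<Sum>j<n. (cmod (v j))\<^sup>2)"

definition rnorm :: "nat \<Rightarrow> (nat \<Rightarrow> real) \<Rightarrow> real" where
  "rnorm d u = sqrt (\<Sum>j<d. (u j)\<^sup>2)"

definition plusv :: "nat \<Rightarrow> (nat \<Rightarrow> complex) \<Rightarrow> nat \<Rightarrow> real" where
  "plusv n v k = (if k < n then Re (v k) else if k < 2*n then Im (v (k - n)) else 0)"

definition ofplus :: "nat \<Rightarrow> (nat \<Rightarrow> real) \<Rightarrow> nat \<Rightarrow> complex" where
  "ofplus n p j = Complex (p j) (p (n + j))"

definition floss :: "nat \<Rightarrow> nat \<Rightarrow> (nat \<Rightarrow> nat \<Rightarrow> complex) \<Rightarrow> (nat \<Rightarrow> complex)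
     \<Rightarrow> (nat \<Rightarrow> real) \<Rightarrow> real" where
  "floss n m a xnat p = (\<Sum>i<m. ((cmod (cinner n (a i) (ofplus n p)))\<^sup>2
                                   - (cmod (cinner n (a i) xnat))\<^sup>2)\<^sup>2)"

definition partial :: "nat \<Rightarrow> ((nat \<Rightarrow> real) \<Rightarrow> real) \<Rightarrow> (nat \<Rightarrow> real) \<Rightarrow> real" where
  "partial j g p = deriv (\<lambda>t. g (p(j := p j + t))) 0"

definition hessian :: "((nat \<Rightarrow> real) \<Rightarrow> real) \<Rightarrow> (nat \<Rightarrow> real) \<Rightarrow> nat \<Rightarrow> nat \<Rightarrow> real" where
  "hessian g p j k = partial j (partial k g) p"

definition hess_form :: "nat \<Rightarrow> ((nat \<Rightarrow> real) \<Rightarrow> real) \<Rightarrow> (nat \<Rightarrow> real) \<Rightarrow> (nat \<Rightarrow> real) \<Rightarrow> real" where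
  "hess_form d g p v = (\<Sum>j<d. \<Sum>k<d. v j * hessian g p j k * v k)"

type_synonym tensor4 = "nat \<Rightarrow> nat \<Rightarrow> nat \<Rightarrow> nat \<Rightarrow> real"

definition tensorT :: "nat \<Rightarrow> nat \<Rightarrow> (nat \<Rightarrow> nat \<Rightarrow> complex) \<Rightarrow> real \<Rightarrow> tensor4" where
  "tensorT n m a \<sigma> i1 i2 i3 i4 = (1 / (real m * \<sigma> ^ 4)) *
     (\<Sum>i<m. plusv n (a i) i1 * plusv n (a i) i2 * plusv n (a i) i3 * plusv n (a i) i4)"

definition tensorS :: tensor4 where
  "tensorS i1 i2 i3 i4 =
     (if i1 = i2 \<and> i3 = i4 then 1 else 0) + (if i1 = i3 \<and> i2 = i4 then 1 else 0)
   + (if i1 = i4 \<and> i2 = i3 then 1 else 0)"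

definition tpair :: "nat \<Rightarrow> tensor4 \<Rightarrow> (nat \<Rightarrow> real) \<Rightarrow> (nat \<Rightarrow> real) \<Rightarrow> (nat \<Rightarrow> real)
     \<Rightarrow> (nat \<Rightarrow> real) \<Rightarrow> real" where
  "tpair d R u1 u2 u3 u4 = (\<Sum>i1<d. \<Sum>i2<d. \<Sum>i3<d. \<Sum>i4<d.
       R i1 i2 i3 i4 * u1 i1 * u2 i2 * u3 i3 * u4 i4)"

definition opnorm :: "nat \<Rightarrow> tensor4 \<Rightarrow> real" where
  "opnorm d R = Sup {tpair d R u1 u2 u3 u4 | u1 u2 u3 u4.
       rnorm d u1 * rnorm d u2 * rnorm d u3 * rnorm d u4 = 1}"

end

theory Submission
  imports Defs
begin

(* Write b_i = a_i^+ and let P, P', V, V' be the real images of x, i*x, x_nat, i*x_nat, so that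
   b_i . P = Re <a_i, x> and b_i . P' = Im <a_i, x>.  The second derivative of f along V is then a
   sum over i of quartic polynomials in b_i . P, b_i . P', b_i . V, b_i . V', i.e. m sigma^4 times a
   fixed linear combination of values of T at these vectors.  With S (the Gaussian fourth moments)
   in place of T the combination equals 32 |x|^2 |x_nat|^2 + 64 (Re <x, x_nat>)^2 - 32 |x_nat|^4,
   and T - S changes it by at most delta0 (48 |x|^2 |x_nat|^2 + 16 |x_nat|^4); with C2 = 24 the
   hypothesis makes the total negative. *)

definition rinner :: "nat \<Rightarrow> (nat \<Rightarrow> real) \<Rightarrow> (nat \<Rightarrow> real) \<Rightarrow> real" where
  "rinner d u w = (\<Sum>j<d. u j * w j)"

lemma rinner_commute: "rinner d u w = rinner d w u"
  unfolding rinner_def by (simp add: mult.commute)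

lemma rinner_update:
  assumes "k < d"
  shows "rinner d l (p(k := p k + t)) = rinner d l p + t * l k"
proof -
  have "rinner d l (p(k := p k + t)) = (\<Sum>j<d. l j * p j + (if j = k then t * l k else 0))"
    unfolding rinner_def by (rule sum.cong) (auto simp: algebra_simps)
  with assms show ?thesis
    by (simp add: sum.distrib rinner_def)
qed

lemma partial_sum_sq_quadratic:
  assumes g: "\<And>p. g p = (\<Sum>i<m. ((rinner d (l i) p)\<^sup>2 + (rinner d (\<kappa> i) p)\<^sup>2 - y i)\<^sup>2)"
    and k: "k < d"
  shows "partial k g p = (\<Sum>i<m. 4 * ((rinner d (l i) p)\<^sup>2 + (rinner d (\<kappa> i) p)\<^sup>2 - y i)
            * (rinner d (l i) p * l i k + rinner d (\<kappa> i) p * \<kappa> i k))"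
proof -
  have "(\<lambda>t. g (p(k := p k + t))) = (\<lambda>t. \<Sum>i<m.
      ((rinner d (l i) p + t * l i k)\<^sup>2 + (rinner d (\<kappa> i) p + t * \<kappa> i k)\<^sup>2 - y i)\<^sup>2)"
    using k by (simp add: g rinner_update)
  moreover have "((\<lambda>t. \<Sum>i<m.
      ((rinner d (l i) p + t * l i k)\<^sup>2 + (rinner d (\<kappa> i) p + t * \<kappa> i k)\<^sup>2 - y i)\<^sup>2)
    has_real_derivative (\<Sum>i<m. 4 * ((rinner d (l i) p)\<^sup>2 + (rinner d (\<kappa> i) p)\<^sup>2 - y i)
            * (rinner d (l i) p * l i k + rinner d (\<kappa> i) p * \<kappa> i k))) (at 0)"
    by (rule derivative_eq_intros refl | simp add: algebra_simps power2_eq_square)+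
  ultimately show ?thesis
    unfolding partial_def by (simp add: DERIV_imp_deriv)
qed

lemma hessian_sum_sq_quadratic:
  assumes g: "\<And>p. g p = (\<Sum>i<m. ((rinner d (l i) p)\<^sup>2 + (rinner d (\<kappa> i) p)\<^sup>2 - y i)\<^sup>2)"
    and j: "j < d" and k: "k < d"
  shows "hessian g p j k = (\<Sum>i<m.
      8 * (rinner d (l i) p * l i j + rinner d (\<kappa> i) p * \<kappa> i j)
        * (rinner d (l i) p * l i k + rinner d (\<kappa> i) p * \<kappa> i k)
      + 4 * ((rinner d (l i) p)\<^sup>2 + (rinner d (\<kappa> i) p)\<^sup>2 - y i) * (l i j * l i k + \<kappa> i j * \<kappa> i k))"
proof -
  have "(\<lambda>s. partial k g (p(j := p j + s))) = (\<lambda>s. \<Sum>i<m.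
      4 * ((rinner d (l i) p + s * l i j)\<^sup>2 + (rinner d (\<kappa> i) p + s * \<kappa> i j)\<^sup>2 - y i)
        * ((rinner d (l i) p + s * l i j) * l i k + (rinner d (\<kappa> i) p + s * \<kappa> i j) * \<kappa> i k))"
    using j by (simp add: partial_sum_sq_quadratic[OF g k] rinner_update)
  moreover have "((\<lambda>s. \<Sum>i<m.
      4 * ((rinner d (l i) p + s * l i j)\<^sup>2 + (rinner d (\<kappa> i) p + s * \<kappa> i j)\<^sup>2 - y i)
        * ((rinner d (l i) p + s * l i j) * l i k + (rinner d (\<kappa> i) p + s * \<kappa> i j) * \<kappa> i k))
    has_real_derivative (\<Sum>i<m.
      8 * (rinner d (l i) p * l i j + rinner d (\<kappa> i) p * \<kappa> i j)
        * (rinner d (l i) p * l i k + rinner d (\<kappa> i) p * \<kappa> i k)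
      + 4 * ((rinner d (l i) p)\<^sup>2 + (rinner d (\<kappa> i) p)\<^sup>2 - y i) * (l i j * l i k + \<kappa> i j * \<kappa> i k)))
    (at 0)"
    by (rule derivative_eq_intros refl | simp add: algebra_simps power2_eq_square)+
  ultimately show ?thesis
    unfolding hessian_def partial_def[of j] by (simp add: DERIV_imp_deriv)
qed

lemma sum_sum_outer_product: "(\<Sum>j<d. \<Sum>k<d. v j * (f j * f k) * v k) = (rinner d v f)\<^sup>2"
  unfolding rinner_def power2_eq_square sum_product by (simp add: ac_simps)

lemma hess_form_sum_sq_quadratic:
  assumes g: "\<And>p. g p = (\<Sum>i<m. ((rinner d (l i) p)\<^sup>2 + (rinner d (\<kappa> i) p)\<^sup>2 - y i)\<^sup>2)"
  shows "hess_form d g p v = (\<Sum>i<m.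
      8 * (rinner d (l i) p * rinner d (l i) v + rinner d (\<kappa> i) p * rinner d (\<kappa> i) v)\<^sup>2
      + 4 * ((rinner d (l i) p)\<^sup>2 + (rinner d (\<kappa> i) p)\<^sup>2 - y i)
          * ((rinner d (l i) v)\<^sup>2 + (rinner d (\<kappa> i) v)\<^sup>2))"
proof -
  define L where "L i = rinner d (l i) p" for i
  define K where "K i = rinner d (\<kappa> i) p" for i
  define A where "A i = (L i)\<^sup>2 + (K i)\<^sup>2 - y i" for i
  define grad where "grad i j = L i * l i j + K i * \<kappa> i j" for i j
  have "hess_form d g p v = (\<Sum>j<d. \<Sum>k<d. \<Sum>i<m.
        8 * (v j * (grad i j * grad i k) * v k)
      + 4 * A i * (v j * (l i j * l i k) * v k) + 4 * A i * (v j * (\<kappa> i j * \<kappa> i k) * v k))"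
    unfolding hess_form_def
    by (intro sum.cong refl)
      (simp add: hessian_sum_sq_quadratic[OF g] sum_distrib_left sum_distrib_right
        L_def K_def A_def grad_def algebra_simps)
  also have "\<dots> = (\<Sum>i<m. 8 * (\<Sum>j<d. \<Sum>k<d. v j * (grad i j * grad i k) * v k)
      + 4 * A i * (\<Sum>j<d. \<Sum>k<d. v j * (l i j * l i k) * v k)
      + 4 * A i * (\<Sum>j<d. \<Sum>k<d. v j * (\<kappa> i j * \<kappa> i k) * v k))"
    by (simp add: sum.distrib sum_distrib_left sum.swap[of _ "{..<m}"])
  also have "\<dots> = (\<Sum>i<m. 8 * (rinner d v (grad i))\<^sup>2
      + 4 * A i * (rinner d v (l i))\<^sup>2 + 4 * A i * (rinner d v (\<kappa> i))\<^sup>2)"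
    by (simp only: sum_sum_outer_product)
  finally show ?thesis
    unfolding L_def K_def A_def grad_def rinner_def
    by (simp add: sum_distrib_left sum.distrib algebra_simps)
qed

lemma sum_lessThan_add:
  fixes n k :: nat
  shows "(\<Sum>j<n + k. f j) = (\<Sum>j<n. f j) + (\<Sum>j<k. f (n + j) :: 'a::comm_monoid_add)"
  by (induction k) (auto simp: add_ac)

lemma rinner_plusv_ofplus: "rinner (2*n) (plusv n z) p = Re (cinner n z (ofplus n p))"
proof -
  have "rinner (2*n) (plusv n z) p = (\<Sum>j<n. Re (z j) * p j) + (\<Sum>j<n. Im (z j) * p (n + j))"
    unfolding rinner_def mult_2 sum_lessThan_add by (simp add: plusv_def)
  then show ?thesis
    by (simp add: cinner_def ofplus_def sum.distrib)
qed

lemma cinner_cong: "(\<And>j. j < n \<Longrightarrow> w j = w' j) \<Longrightarrow> cinner n z w = cinner n z w'"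
  unfolding cinner_def by (rule sum.cong) auto

lemma rinner_plusv: "rinner (2*n) (plusv n z) (plusv n w) = Re (cinner n z w)"
proof -
  have "cinner n z (ofplus n (plusv n w)) = cinner n z w"
    by (rule cinner_cong) (simp add: ofplus_def plusv_def complex_eq_iff)
  then show ?thesis
    by (simp add: rinner_plusv_ofplus)
qed

lemma cinner_scaleL: "cinner n (\<lambda>j. c * z j) w = c * cinner n z w"
  by (simp add: cinner_def sum_distrib_left mult.assoc)

lemma cinner_scaleR: "cinner n z (\<lambda>j. c * w j) = cnj c * cinner n z w"
  by (simp add: cinner_def sum_distrib_left algebra_simps)

lemma cinner_self: "cinner n z z = complex_of_real ((cnorm n z)\<^sup>2)"
  by (simp add: cinner_def cnorm_def complex_mult_cnj sum_nonneg cmod_power2)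

lemma cnorm_nonneg: "cnorm n z \<ge> 0"
  by (simp add: cnorm_def sum_nonneg)

lemma cnorm_mult_ii: "cnorm n (\<lambda>j. \<i> * z j) = cnorm n z"
  by (simp add: cnorm_def norm_mult)

lemma rnorm_plusv: "rnorm (2*n) (plusv n z) = cnorm n z"
proof -
  have "rnorm (2*n) (plusv n z) = sqrt (rinner (2*n) (plusv n z) (plusv n z))"
    by (simp add: rnorm_def rinner_def power2_eq_square)
  then show ?thesis
    by (simp add: rinner_plusv cinner_self cnorm_nonneg)
qed

lemma cmod_cinner_sq:
  "(cmod (cinner n a z))\<^sup>2 = (rinner (2*n) (plusv n a) (plusv n z))\<^sup>2
     + (rinner (2*n) (plusv n a) (plusv n (\<lambda>j. \<i> * z j)))\<^sup>2"
  by (simp add: rinner_plusv cinner_scaleR cmod_power2)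

lemma rinner_plusv_rotate:
  "rinner (2*n) (plusv n (\<lambda>j. - (\<i> * a j))) (plusv n z)
     = rinner (2*n) (plusv n a) (plusv n (\<lambda>j. \<i> * z j))"
  by (simp add: rinner_plusv cinner_scaleL[where c="- \<i>", simplified] cinner_scaleR)

lemma floss_eq_sum_sq_quadratic:
  "floss n m a xnat p = (\<Sum>i<m. ((rinner (2*n) (plusv n (a i)) p)\<^sup>2
     + (rinner (2*n) (plusv n (\<lambda>j. - \<i> * a i j)) p)\<^sup>2 - (cmod (cinner n (a i) xnat))\<^sup>2)\<^sup>2)"
  unfolding floss_def
  by (simp add: rinner_plusv_ofplus cinner_scaleL[where c="- \<i>", simplified] cmod_power2)

lemma tpair_add:
  "tpair d (\<lambda>i1 i2 i3 i4. R i1 i2 i3 i4 + Q i1 i2 i3 i4) u1 u2 u3 u4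
     = tpair d R u1 u2 u3 u4 + tpair d Q u1 u2 u3 u4"
  unfolding tpair_def by (simp add: sum.distrib algebra_simps)

lemma tpair_sum:
  "tpair d (\<lambda>i1 i2 i3 i4. \<Sum>q\<in>I. R q i1 i2 i3 i4) u1 u2 u3 u4 = (\<Sum>q\<in>I. tpair d (R q) u1 u2 u3 u4)"
  unfolding tpair_def sum_distrib_right by (simp only: sum.swap[of _ I])

lemma tpair_cmult:
  "tpair d (\<lambda>i1 i2 i3 i4. c * R i1 i2 i3 i4) u1 u2 u3 u4 = c * tpair d R u1 u2 u3 u4"
  unfolding tpair_def by (simp add: sum_distrib_left ac_simps)

lemma tpair_rank_one:
  "tpair d (\<lambda>i1 i2 i3 i4. w1 i1 * w2 i2 * w3 i3 * w4 i4) u1 u2 u3 u4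
     = rinner d w1 u1 * rinner d w2 u2 * rinner d w3 u3 * rinner d w4 u4"
proof -
  have "tpair d (\<lambda>i1 i2 i3 i4. w1 i1 * w2 i2 * w3 i3 * w4 i4) u1 u2 u3 u4 = (\<Sum>i1<d.
      (\<Sum>i2<d. (\<Sum>i3<d. (\<Sum>i4<d. w1 i1 * u1 i1 * (w2 i2 * u2 i2) * (w3 i3 * u3 i3)
        * (w4 i4 * u4 i4)))))"
    unfolding tpair_def by (simp add: ac_simps)
  then show ?thesis
    unfolding rinner_def by (simp only: sum_distrib_left[symmetric] sum_distrib_right[symmetric])
qed

lemma tpair_tensorT:
  "tpair d (tensorT n m a \<sigma>) u1 u2 u3 u4 = 1 / (real m * \<sigma> ^ 4) * (\<Sum>i<m.
     rinner d (plusv n (a i)) u1 * rinner d (plusv n (a i)) u2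
       * rinner d (plusv n (a i)) u3 * rinner d (plusv n (a i)) u4)"
  unfolding tensorT_def[abs_def] by (simp only: tpair_cmult tpair_sum tpair_rank_one)

lemma sum_delta_conj:
  assumes "finite A"
  shows "(\<Sum>j\<in>A. if P \<and> k = j then f j else 0) = (if P \<and> k \<in> A then f k else 0)"
    and "(\<Sum>j\<in>A. if k = j \<and> P then f j else 0) = (if k \<in> A \<and> P then f k else 0)"
  using assms by (cases P; simp)+

lemma sum_if_const: "(\<Sum>j\<in>A. if P then f j else 0) = (if P then sum f A else 0)"
  by simp

lemma tpair_tensorS:
  "tpair d tensorS u1 u2 u3 u4 = rinner d u1 u2 * rinner d u3 u4
     + rinner d u1 u3 * rinner d u2 u4 + rinner d u1 u4 * rinner d u2 u3"
proof -
  have "tpair d (\<lambda>i1 i2 i3 i4. if i1 = i2 \<and> i3 = i4 then 1 else 0) u1 u2 u3 u4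
      = rinner d u1 u2 * rinner d u3 u4"
   and "tpair d (\<lambda>i1 i2 i3 i4. if i1 = i3 \<and> i2 = i4 then 1 else 0) u1 u2 u3 u4
      = rinner d u1 u3 * rinner d u2 u4"
   and "tpair d (\<lambda>i1 i2 i3 i4. if i1 = i4 \<and> i2 = i3 then 1 else 0) u1 u2 u3 u4
      = rinner d u1 u4 * rinner d u2 u3"
    unfolding tpair_def rinner_def
    by (simp add: if_distrib[of "\<lambda>z. z * _"] sum_delta_conj sum_if_const
          cong: if_cong sum.cong del: lessThan_iff,
        simp add: sum_product ac_simps)+
  then show ?thesis
    unfolding tensorS_def[abs_def] by (simp only: tpair_add)
qed

lemma tpair_scale:
  "tpair d R (\<lambda>j. c1 * u1 j) (\<lambda>j. c2 * u2 j) (\<lambda>j. c3 * u3 j) (\<lambda>j. c4 * u4 j)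
     = c1 * c2 * c3 * c4 * tpair d R u1 u2 u3 u4"
  unfolding tpair_def by (simp add: sum_distrib_left ac_simps)

lemma rnorm_nonneg: "rnorm d u \<ge> 0"
  unfolding rnorm_def by (simp add: sum_nonneg)

lemma rnorm_scale: "rnorm d (\<lambda>j. c * u j) = \<bar>c\<bar> * rnorm d u"
  unfolding rnorm_def by (simp add: power_mult_distrib sum_distrib_left[symmetric] real_sqrt_mult)

lemma abs_le_rnorm:
  assumes "j < d"
  shows "\<bar>u j\<bar> \<le> rnorm d u"
proof -
  have "(u j)\<^sup>2 \<le> (\<Sum>i<d. (u i)\<^sup>2)"
    using assms by (intro member_le_sum) auto
  then show ?thesis
    unfolding rnorm_def by (metis real_sqrt_abs real_sqrt_le_mono)
qed

lemma abs_tpair_le_sum_abs: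
  "\<bar>tpair d R u1 u2 u3 u4\<bar> \<le> (\<Sum>i1<d. \<Sum>i2<d. \<Sum>i3<d. \<Sum>i4<d. \<bar>R i1 i2 i3 i4\<bar>)
      * (rnorm d u1 * rnorm d u2 * rnorm d u3 * rnorm d u4)"
proof -
  let ?N = "rnorm d u1 * rnorm d u2 * rnorm d u3 * rnorm d u4"
  have "\<bar>R i1 i2 i3 i4 * u1 i1 * u2 i2 * u3 i3 * u4 i4\<bar> \<le> \<bar>R i1 i2 i3 i4\<bar> * ?N"
    if "i1 < d" "i2 < d" "i3 < d" "i4 < d" for i1 i2 i3 i4
  proof -
    have "\<bar>u1 i1\<bar> * \<bar>u2 i2\<bar> * \<bar>u3 i3\<bar> * \<bar>u4 i4\<bar> \<le> ?N"
      using that by (intro mult_mono abs_le_rnorm) (auto simp: rnorm_nonneg)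
    then show ?thesis
      by (simp add: abs_mult mult.assoc mult_left_mono)
  qed
  then have "\<bar>tpair d R u1 u2 u3 u4\<bar> \<le> (\<Sum>i1<d. \<Sum>i2<d. \<Sum>i3<d. \<Sum>i4<d. \<bar>R i1 i2 i3 i4\<bar> * ?N)"
    unfolding tpair_def
    by (intro order_trans[OF sum_abs] sum_mono; simp)+
  then show ?thesis
    by (simp add: sum_distrib_right)
qed

lemma tpair_le_opnorm:
  assumes "rnorm d u1 * rnorm d u2 * rnorm d u3 * rnorm d u4 = 1"
  shows "tpair d R u1 u2 u3 u4 \<le> opnorm d R"
proof -
  let ?B = "\<Sum>i1<d. \<Sum>i2<d. \<Sum>i3<d. \<Sum>i4<d. \<bar>R i1 i2 i3 i4\<bar>"
  let ?X = "{tpair d R u1 u2 u3 u4 | u1 u2 u3 u4.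
       rnorm d u1 * rnorm d u2 * rnorm d u3 * rnorm d u4 = 1}"
  have bdd: "bdd_above ?X"
  proof (rule bdd_aboveI)
    fix t
    assume "t \<in> ?X"
    then obtain w1 w2 w3 w4 where "t = tpair d R w1 w2 w3 w4"
      and "rnorm d w1 * rnorm d w2 * rnorm d w3 * rnorm d w4 = 1"
      by blast
    then show "t \<le> ?B"
      using abs_tpair_le_sum_abs[of d R w1 w2 w3 w4] by simp
  qed
  show ?thesis
    unfolding opnorm_def by (rule cSup_upper[OF _ bdd]) (use assms in blast)
qed

lemma abs_tpair_le_opnorm:
  "\<bar>tpair d R u1 u2 u3 u4\<bar> \<le> opnorm d R * (rnorm d u1 * rnorm d u2 * rnorm d u3 * rnorm d u4)"
proof (cases "rnorm d u1 * rnorm d u2 * rnorm d u3 * rnorm d u4 = 0")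
  case True
  then show ?thesis
    using abs_tpair_le_sum_abs[of d R u1 u2 u3 u4] by (simp only: True mult_zero_right)
next
  case False
  let ?N = "rnorm d u1 * rnorm d u2 * rnorm d u3 * rnorm d u4"
  have pos: "rnorm d u1 > 0" "rnorm d u2 > 0" "rnorm d u3 > 0" "rnorm d u4 > 0"
    using False rnorm_nonneg[of d] by (auto simp: order.strict_iff_order)
  have "s * tpair d R u1 u2 u3 u4 / ?N \<le> opnorm d R" if "\<bar>s\<bar> = 1" for s
  proof -
    have "s * tpair d R u1 u2 u3 u4 / ?N = tpair d R (\<lambda>j. s / rnorm d u1 * u1 j)
        (\<lambda>j. 1 / rnorm d u2 * u2 j) (\<lambda>j. 1 / rnorm d u3 * u3 j) (\<lambda>j. 1 / rnorm d u4 * u4 j)"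
      by (simp only: tpair_scale) simp
    also have "\<dots> \<le> opnorm d R"
      using pos that by (intro tpair_le_opnorm) (simp only: rnorm_scale, simp add: abs_divide)
    finally show ?thesis .
  qed
  from this[of 1] this[of "-1"] have "\<bar>tpair d R u1 u2 u3 u4\<bar> / ?N \<le> opnorm d R"
    by (simp add: abs_if)
  then show ?thesis
    using pos by (simp add: divide_le_eq mult.commute)
qed

(* The Hessian form of f at x^+ in direction v^+ is m sigma^4 hess_moment_form n T x v: with
   p = b.P, p' = b.P', q = b.V, q' = b.V' (b = a_i^+), the i-th summand of the Hessian form is
   8 (p q + p' q')^2 + 4 (p^2 + p'^2 - q^2 - q'^2) (q^2 + q'^2), and expanding it gives the
   coefficients below. *)
definition hess_moment_form :: "nat \<Rightarrow> tensor4 \<Rightarrow> (nat \<Rightarrow> complex) \<Rightarrow> (nat \<Rightarrow> complex) \<Rightarrow> real" where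
  "hess_moment_form n R x v =
     (let P = plusv n x; P' = plusv n (\<lambda>j. \<i> * x j);
          V = plusv n v; V' = plusv n (\<lambda>j. \<i> * v j); t = tpair (2*n) R
      in 12 * t P P V V + 16 * t P V P' V' + 12 * t P' P' V' V' + 4 * t P P V' V' + 4 * t P' P' V V
         - 4 * t V V V V - 8 * t V V V' V' - 4 * t V' V' V' V')"

lemma hess_form_floss_eq_hess_moment_form:
  assumes "m \<noteq> 0" and "\<sigma> \<noteq> 0"
  shows "hess_form (2*n) (floss n m a v) (plusv n x) (plusv n v)
           = real m * \<sigma> ^ 4 * hess_moment_form n (tensorT n m a \<sigma>) x v"
proof -
  define P P' V V' where "P = plusv n x" and "P' = plusv n (\<lambda>j. \<i> * x j)"
    and "V = plusv n v" and "V' = plusv n (\<lambda>j. \<i> * v j)"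
  define p p' q q' where "p i = rinner (2*n) (plusv n (a i)) P" and "p' i = rinner (2*n) (plusv n (a i)) P'"
    and "q i = rinner (2*n) (plusv n (a i)) V" and "q' i = rinner (2*n) (plusv n (a i)) V'" for i
  have "hess_form (2*n) (floss n m a v) P V = (\<Sum>i<m. 8 * (p i * q i + p' i * q' i)\<^sup>2
      + 4 * ((p i)\<^sup>2 + (p' i)\<^sup>2 - ((q i)\<^sup>2 + (q' i)\<^sup>2)) * ((q i)\<^sup>2 + (q' i)\<^sup>2))"
    unfolding hess_form_sum_sq_quadratic[OF floss_eq_sum_sq_quadratic] P_def P'_def V_def V'_def
      p_def p'_def q_def q'_def
    by (simp add: rinner_plusv_rotate cmod_cinner_sq)
  also have "\<dots> = real m * \<sigma> ^ 4 * hess_moment_form n (tensorT n m a \<sigma>) x v"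
    unfolding hess_moment_form_def Let_def tpair_tensorT
      P_def[symmetric] P'_def[symmetric] V_def[symmetric] V'_def[symmetric]
      p_def[symmetric] p'_def[symmetric] q_def[symmetric] q'_def[symmetric]
    using assms
    by (simp add: sum_distrib_left sum.distrib[symmetric] sum_subtractf[symmetric])
      (intro sum.cong refl; simp add: power2_eq_square algebra_simps)
  finally show ?thesis
    unfolding P_def V_def .
qed

lemma hess_moment_form_add:
  "hess_moment_form n (\<lambda>i1 i2 i3 i4. R i1 i2 i3 i4 + Q i1 i2 i3 i4) x v
     = hess_moment_form n R x v + hess_moment_form n Q x v"
  unfolding hess_moment_form_def Let_def tpair_add by simp

lemma hess_moment_form_tensorS:
  "hess_moment_form n tensorS x v
     = 32 * (cnorm n x)\<^sup>2 * (cnorm n v)\<^sup>2 + 64 * (Re (cinner n x v))\<^sup>2 - 32 * (cnorm n v) ^ 4"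
proof -
  define P P' V V' where "P = plusv n x" and "P' = plusv n (\<lambda>j. \<i> * x j)"
    and "V = plusv n v" and "V' = plusv n (\<lambda>j. \<i> * v j)"
  have "rinner (2*n) P P = (cnorm n x)\<^sup>2" "rinner (2*n) P' P' = (cnorm n x)\<^sup>2"
    "rinner (2*n) V V = (cnorm n v)\<^sup>2" "rinner (2*n) V' V' = (cnorm n v)\<^sup>2"
    "rinner (2*n) P P' = 0" "rinner (2*n) V V' = 0"
    "rinner (2*n) P V = Re (cinner n x v)" "rinner (2*n) P' V' = Re (cinner n x v)"
    "rinner (2*n) P V' = Im (cinner n x v)" "rinner (2*n) P' V = - Im (cinner n x v)"
    unfolding P_def P'_def V_def V'_def
    by (simp_all add: rinner_plusv cinner_scaleL cinner_scaleR cinner_self)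
  then show ?thesis
    unfolding hess_moment_form_def Let_def tpair_tensorS
      P_def[symmetric] P'_def[symmetric] V_def[symmetric] V'_def[symmetric]
    by (simp add: rinner_commute[of _ V P'] power2_eq_square power4_eq_xxxx algebra_simps)
qed

lemma abs_hess_moment_form_le:
  "\<bar>hess_moment_form n R x v\<bar>
     \<le> opnorm (2*n) R * (48 * (cnorm n x)\<^sup>2 * (cnorm n v)\<^sup>2 + 16 * (cnorm n v) ^ 4)"
proof -
  define P P' V V' where "P = plusv n x" and "P' = plusv n (\<lambda>j. \<i> * x j)"
    and "V = plusv n v" and "V' = plusv n (\<lambda>j. \<i> * v j)"
  define r s where "r = cnorm n x" and "s = cnorm n v"
  let ?t = "tpair (2*n) R" and ?M = "opnorm (2*n) R"
  have norms: "rnorm (2*n) P = r" "rnorm (2*n) P' = r" "rnorm (2*n) V = s" "rnorm (2*n) V' = s"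
    unfolding P_def P'_def V_def V'_def r_def s_def by (simp_all add: rnorm_plusv cnorm_mult_ii)
  have bound_xv: "\<bar>?t u1 u2 u3 u4\<bar> \<le> ?M * (r\<^sup>2 * s\<^sup>2)"
    if "rnorm (2*n) u1 * rnorm (2*n) u2 * rnorm (2*n) u3 * rnorm (2*n) u4 = r\<^sup>2 * s\<^sup>2"
    for u1 u2 u3 u4
    using abs_tpair_le_opnorm[of "2*n" R u1 u2 u3 u4] that by simp
  have bound_vv: "\<bar>?t u1 u2 u3 u4\<bar> \<le> ?M * s ^ 4"
    if "rnorm (2*n) u1 * rnorm (2*n) u2 * rnorm (2*n) u3 * rnorm (2*n) u4 = s ^ 4"
    for u1 u2 u3 u4
    using abs_tpair_le_opnorm[of "2*n" R u1 u2 u3 u4] that by simp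
  have "\<bar>?t P P V V\<bar> \<le> ?M * (r\<^sup>2 * s\<^sup>2)" "\<bar>?t P V P' V'\<bar> \<le> ?M * (r\<^sup>2 * s\<^sup>2)"
    "\<bar>?t P' P' V' V'\<bar> \<le> ?M * (r\<^sup>2 * s\<^sup>2)" "\<bar>?t P P V' V'\<bar> \<le> ?M * (r\<^sup>2 * s\<^sup>2)"
    "\<bar>?t P' P' V V\<bar> \<le> ?M * (r\<^sup>2 * s\<^sup>2)" "\<bar>?t V V V V\<bar> \<le> ?M * s ^ 4"
    "\<bar>?t V V V' V'\<bar> \<le> ?M * s ^ 4" "\<bar>?t V' V' V' V'\<bar> \<le> ?M * s ^ 4"
    by (rule bound_xv bound_vv; simp only: norms; simp add: power2_eq_square power4_eq_xxxx)+
  then have "\<bar>hess_moment_form n R x v\<bar> \<le> 48 * (?M * (r\<^sup>2 * s\<^sup>2)) + 16 * (?M * s ^ 4)"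
    unfolding hess_moment_form_def Let_def P_def[symmetric] P'_def[symmetric] V_def[symmetric]
      V'_def[symmetric]
    by linarith
  then show ?thesis
    unfolding r_def s_def by (simp add: algebra_simps)
qed

lemma hess_moment_form_le_perturbed:
  assumes "opnorm (2*n) (\<lambda>i1 i2 i3 i4. R i1 i2 i3 i4 - tensorS i1 i2 i3 i4) < \<delta>"
  shows "hess_moment_form n R x v \<le> 32 * (cnorm n x)\<^sup>2 * (cnorm n v)\<^sup>2 + 64 * (Re (cinner n x v))\<^sup>2
           - 32 * (cnorm n v) ^ 4 + \<delta> * (48 * (cnorm n x)\<^sup>2 * (cnorm n v)\<^sup>2 + 16 * (cnorm n v) ^ 4)"
proof -
  define E where "E = (\<lambda>i1 i2 i3 i4. R i1 i2 i3 i4 - tensorS i1 i2 i3 i4)"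
  have "R = (\<lambda>i1 i2 i3 i4. tensorS i1 i2 i3 i4 + E i1 i2 i3 i4)"
    by (simp add: E_def)
  then have "hess_moment_form n R x v = hess_moment_form n tensorS x v + hess_moment_form n E x v"
    by (simp add: hess_moment_form_add)
  moreover have "opnorm (2*n) E * (48 * (cnorm n x)\<^sup>2 * (cnorm n v)\<^sup>2 + 16 * (cnorm n v) ^ 4)
      \<le> \<delta> * (48 * (cnorm n x)\<^sup>2 * (cnorm n v)\<^sup>2 + 16 * (cnorm n v) ^ 4)"
    using assms unfolding E_def[symmetric] by (intro mult_right_mono) auto
  ultimately show ?thesis
    using abs_hess_moment_form_le[of n E x v] hess_moment_form_tensorS[of n x v] by linarith
qed

theorem proposition6:
  shows "\<exists>C2>0. \<forall>(n::nat) (m::nat) (a::nat \<Rightarrow> nat \<Rightarrow> complex) (xnat::nat \<Rightarrow> complex)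
      (\<sigma>::real) (\<delta>0::real) (x::nat \<Rightarrow> complex).
      n \<ge> 1 \<and> m \<ge> 1 \<and> cnorm n xnat \<noteq> 0 \<and> \<sigma> > 0 \<and> \<delta>0 > 0 \<and>
      opnorm (2*n) (\<lambda>i1 i2 i3 i4. tensorT n m a \<sigma> i1 i2 i3 i4 - tensorS i1 i2 i3 i4) < \<delta>0 \<and>
      8 * (cmod (cinner n x xnat))\<^sup>2 / (cnorm n xnat) ^ 4
        + (4 + \<delta>0 * C2 / 4) * (cnorm n x)\<^sup>2 / (cnorm n xnat)\<^sup>2 \<le> 4 - \<delta>0 * C2 / 4
      \<longrightarrow> hess_form (2*n) (floss n m a xnat) (plusv n x) (plusv n xnat) < 0"
proof (intro exI[of _ 24] conjI allI impI)
  fix n m :: nat and a :: "nat \<Rightarrow> nat \<Rightarrow> complex" and v x :: "nat \<Rightarrow> complex" and \<sigma> \<delta> :: real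
  define r s c where "r = cnorm n x" and "s = cnorm n v" and "c = cmod (cinner n x v)"
  assume "1 \<le> n \<and> 1 \<le> m \<and> cnorm n v \<noteq> 0 \<and> 0 < \<sigma> \<and> 0 < \<delta> \<and>
      opnorm (2 * n) (\<lambda>i1 i2 i3 i4. tensorT n m a \<sigma> i1 i2 i3 i4 - tensorS i1 i2 i3 i4) < \<delta> \<and>
      8 * (cmod (cinner n x v))\<^sup>2 / cnorm n v ^ 4 + (4 + \<delta> * 24 / 4) * (cnorm n x)\<^sup>2 / (cnorm n v)\<^sup>2
        \<le> 4 - \<delta> * 24 / 4"
  then have m: "m \<noteq> 0" and \<sigma>: "\<sigma> > 0" and s: "s > 0" and \<delta>: "\<delta> > 0"
    and T: "hess_moment_form n (tensorT n m a \<sigma>) x v \<le> 32 * r\<^sup>2 * s\<^sup>2 + 64 * (Re (cinner n x v))\<^sup>2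
              - 32 * s ^ 4 + \<delta> * (48 * r\<^sup>2 * s\<^sup>2 + 16 * s ^ 4)"
    and hyp: "8 * c\<^sup>2 / s ^ 4 + (4 + 6 * \<delta>) * r\<^sup>2 / s\<^sup>2 \<le> 4 - 6 * \<delta>"
    using cnorm_nonneg[of n v] hess_moment_form_le_perturbed
    by (auto simp: r_def s_def c_def order.strict_iff_order)
  from hyp s have "8 * c\<^sup>2 + (4 + 6 * \<delta>) * (r\<^sup>2 * s\<^sup>2) \<le> (4 - 6 * \<delta>) * s ^ 4"
    by (simp add: field_simps power4_eq_xxxx power2_eq_square)
  moreover have "(Re (cinner n x v))\<^sup>2 \<le> c\<^sup>2"
    unfolding c_def by (simp add: cmod_power2)
  moreover have "\<delta> * s ^ 4 > 0"
    using \<delta> s by simp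
  ultimately have "hess_moment_form n (tensorT n m a \<sigma>) x v < 0"
    using T by (simp add: algebra_simps)
  then show "hess_form (2*n) (floss n m a v) (plusv n x) (plusv n v) < 0"
    using hess_form_floss_eq_hess_moment_form[of m \<sigma> n a v x] m \<sigma> by (simp add: mult_pos_neg)
qed simp

end
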